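(* Let $A$ be a finite alphabet, $f$ a bLSP morphism on $A$ and $a,b,c$ pairwise distinct letters of $A$. Then $f$ is LSP $(a,b,c)$-breaking if and only if the longest common prefix of $f(b)$ and $f(c)$ is strictly longer than the longest common prefix of $f(a)$ and $f(b)$.
   Context: A finite word $u$ is a left special factor of a word $w$ if there are distinct letters $x\neq y$ with $xu$ and $yu$ factors of $w$. A word is LSP if every left special factor of it is a prefix of it. A bLSP morphism on $A$ is an endomorphism $f$ of $A^*$ such that there is a letter $\alpha$ with $f(\alpha)=\alpha$ and, for every letter $\beta\neq\alpha$, there is a letter $\gamma$ with $f(\beta)=f(\gamma)\beta$. For pairwise distinct letters $a,b,c$, an infinite word $\mathbf{w}$ is $(a,b,c)$-fragile if there exist a finite word $u$ and distinct letters $\beta\neq\gamma$ such that $ua$ is a prefix of $\mathbf{w}$ and $\beta ub$, $\gamma uc$ are factors of $\mathbf{w}$. A morphism $f$ is LSP $(a,b,c)$-breaking if for every $(a,b,c)$-fragile infinite LSP word $\mathbf{w}$, $f(\mathbf{w})$ is not LSP. *)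

theory Defs
  imports Main
begin

definition pref :: "(nat \<Rightarrow> 'a) \<Rightarrow> nat \<Rightarrow> 'a list" where
  "pref w n = map w [0..<n]"

definition is_factor_inf :: "'a list \<Rightarrow> (nat \<Rightarrow> 'a) \<Rightarrow> bool" where
  "is_factor_inf u w \<longleftrightarrow> (\<exists>i. u = map w [i..<i + length u])"

definition is_prefix_inf :: "'a list \<Rightarrow> (nat \<Rightarrow> 'a) \<Rightarrow> bool" where
  "is_prefix_inf u w \<longleftrightarrow> u = pref w (length u)"

definition left_special_inf :: "'a list \<Rightarrow> (nat \<Rightarrow> 'a) \<Rightarrow> bool" where
  "left_special_inf u w \<longleftrightarrow>
     (\<exists>x y. x \<noteq> y \<and> is_factor_inf (x # u) w \<and> is_factor_inf (y # u) w)"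

definition LSP_inf :: "(nat \<Rightarrow> 'a) \<Rightarrow> bool" where
  "LSP_inf w \<longleftrightarrow> (\<forall>u. left_special_inf u w \<longrightarrow> is_prefix_inf u w)"

definition morph :: "('a \<Rightarrow> 'a list) \<Rightarrow> 'a list \<Rightarrow> 'a list" where
  "morph f u = concat (map f u)"

text \<open>Image of an infinite word under a morphism (meaningful for non-erasing f,
  in particular for bLSP morphisms): the n-th letter of f(w) is the n-th letter
  of f(w_0 ... w_n).\<close>
definition morph_inf :: "('a \<Rightarrow> 'a list) \<Rightarrow> (nat \<Rightarrow> 'a) \<Rightarrow> (nat \<Rightarrow> 'a)" where
  "morph_inf f w = (\<lambda>n. morph f (pref w (Suc n)) ! n)"

definition bLSP :: "'a set \<Rightarrow> ('a \<Rightarrow> 'a list) \<Rightarrow> bool" where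
  "bLSP A f \<longleftrightarrow> (\<forall>x\<in>A. set (f x) \<subseteq> A) \<and>
     (\<exists>\<alpha>\<in>A. f \<alpha> = [\<alpha>] \<and> (\<forall>\<beta>\<in>A. \<beta> \<noteq> \<alpha> \<longrightarrow> (\<exists>\<gamma>\<in>A. f \<beta> = f \<gamma> @ [\<beta>])))"

definition fragile :: "'a \<Rightarrow> 'a \<Rightarrow> 'a \<Rightarrow> (nat \<Rightarrow> 'a) \<Rightarrow> bool" where
  "fragile a b c w \<longleftrightarrow> (\<exists>u \<beta> \<gamma>. \<beta> \<noteq> \<gamma> \<and> is_prefix_inf (u @ [a]) w \<and>
      is_factor_inf (\<beta> # u @ [b]) w \<and> is_factor_inf (\<gamma> # u @ [c]) w)"

definition LSP_breaking :: "'a set \<Rightarrow> ('a \<Rightarrow> 'a list) \<Rightarrow> 'a \<Rightarrow> 'a \<Rightarrow> 'a \<Rightarrow> bool" where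
  "LSP_breaking A f a b c \<longleftrightarrow>
     (\<forall>w. (\<forall>n. w n \<in> A) \<longrightarrow> fragile a b c w \<longrightarrow> LSP_inf w \<longrightarrow> \<not> LSP_inf (morph_inf f w))"

fun lcp :: "'a list \<Rightarrow> 'a list \<Rightarrow> 'a list" where
  "lcp (x # xs) (y # ys) = (if x = y then x # lcp xs ys else [])"
| "lcp _ _ = []"

end

theory Submission
  imports Defs "HOL-Library.Omega_Words_Fun"
begin

text \<open>For a bLSP morphism every image \<open>f z\<close> is a chain \<open>\<alpha> = z\<^sub>0, \<dots>, z\<^sub>k = z\<close> with
  \<open>f z\<^sub>i = z\<^sub>0 \<cdots> z\<^sub>i\<close>. Hence in an image \<open>f(w)\<close> the letter \<open>\<alpha>\<close> occurs only at the start of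
  a block \<open>f(w\<^sub>k)\<close>, and the letter preceding any other letter \<open>e\<close> is determined by \<open>e\<close>. So a
  nonempty left special factor of \<open>f(w)\<close> starts right after the ends of two blocks \<open>f(x)\<close>,
  \<open>f(y)\<close> with \<open>x \<noteq> y\<close>, and is a common prefix of the images of the two following suffixes
  of \<open>w\<close>; such a common prefix is not longer than the longest common prefix of their first
  blocks.

  If \<open>|lcp(f b, f c)| > |lcp(f a, f b)| = l\<close>, the images of the factors \<open>\<beta>ub\<close>, \<open>\<gamma>uc\<close> of a
  fragile word make \<open>f(u)p\<close> left special, where \<open>p\<close> is the common prefix of length \<open>l + 1\<close> of
  \<open>f b\<close> and \<open>f c\<close>; but \<open>f(u)f(a)\<alpha>\<close> is a prefix of \<open>f(w)\<close> and \<open>p\<close> is not a prefix of \<open>f(a)\<alpha>\<close>.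
  Otherwise \<open>(abc)\<^sup>\<omega>\<close> is fragile and LSP, and by the bound above every left special factor
  of its image is a common prefix of the images of \<open>(bca)\<^sup>\<omega>\<close> and \<open>(cab)\<^sup>\<omega>\<close> (or of the image
  itself), hence a prefix of the image.\<close>

section \<open>Prefixes and factors of infinite words\<close>

lemma length_pref [simp]: "length (pref w n) = n"
  by (simp add: pref_def)

lemma nth_pref [simp]: "i < n \<Longrightarrow> pref w n ! i = w i"
  by (simp add: pref_def)

lemma pref_0 [simp]: "pref w 0 = []"
  by (simp add: pref_def)

lemma pref_add: "pref w (k + m) = pref w k @ pref (suffix k w) m"
  by (rule nth_equalityI) (auto simp: nth_append)

lemma pref_Suc: "pref w (Suc k) = pref w k @ [w k]"
  using pref_add[of w k 1] by (simp add: pref_def)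

lemma take_pref: "n \<le> m \<Longrightarrow> take n (pref w m) = pref w n"
  by (simp add: pref_def take_map)

lemma is_prefix_inf_iff_nth: "is_prefix_inf u w \<longleftrightarrow> (\<forall>t<length u. w t = u ! t)"
  unfolding is_prefix_inf_def by (metis length_pref nth_equalityI nth_pref)

lemma is_prefix_inf_Cons: "is_prefix_inf (x # u) w \<longleftrightarrow> w 0 = x \<and> is_prefix_inf u (suffix 1 w)"
  by (auto simp: is_prefix_inf_iff_nth nth_Cons split: nat.split)

lemma is_prefix_inf_take:
  assumes "is_prefix_inf x w" "is_prefix_inf y w" "length x \<le> length y"
  shows "x = take (length x) y"
  using assms unfolding is_prefix_inf_def by (metis take_map pref_def take_upt add_0)

lemma is_factor_inf_iff_prefix_suffix: "is_factor_inf u w \<longleftrightarrow> (\<exists>i. is_prefix_inf u (suffix i w))"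
proof -
  have "map w [i..<i + length u] = pref (suffix i w) (length u)" for i
    by (rule nth_equalityI) auto
  then show ?thesis
    unfolding is_factor_inf_def is_prefix_inf_def by simp
qed

lemma is_factor_inf_iff_nth: "is_factor_inf u w \<longleftrightarrow> (\<exists>i. \<forall>t<length u. w (i + t) = u ! t)"
  by (simp add: is_factor_inf_iff_prefix_suffix is_prefix_inf_iff_nth)

lemma is_factor_inf_infix:
  assumes "is_factor_inf (x @ v @ y) w"
  shows "is_factor_inf v w"
proof -
  obtain i where i: "\<forall>t<length (x @ v @ y). w (i + t) = (x @ v @ y) ! t"
    using assms by (auto simp: is_factor_inf_iff_nth)
  have "w (i + length x + t) = v ! t" if "t < length v" for t
    using i[rule_format, of "length x + t"] that by (simp add: nth_append add.assoc)
  then show ?thesis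
    unfolding is_factor_inf_iff_nth by blast
qed

lemma set_subset_range_if_factor: "is_factor_inf v w \<Longrightarrow> set v \<subseteq> range w"
  unfolding is_factor_inf_def by (metis image_mono set_map subset_UNIV)

lemma Suc_mod_eq_Suc_mod_iff: "Suc i mod n = Suc j mod n \<longleftrightarrow> i mod n = j mod n"
proof (cases "n = 0")
  case False
  then show ?thesis
    using mod_Suc[of i n] mod_Suc[of j n] mod_less_divisor[of n i] mod_less_divisor[of n j]
    by (auto split: if_splits)
qed simp

lemma LSP_inf_iter:
  assumes "distinct xs" "xs \<noteq> []"
  shows "LSP_inf (xs\<^sup>\<omega>)"
  unfolding LSP_inf_def
proof (intro allI impI)
  fix u
  assume "left_special_inf u (xs\<^sup>\<omega>)"
  then obtain x y i j where "x \<noteq> y"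
    and i: "\<forall>t<length (x # u). xs\<^sup>\<omega> (i + t) = (x # u) ! t"
    and j: "\<forall>t<length (y # u). xs\<^sup>\<omega> (j + t) = (y # u) ! t"
    unfolding left_special_inf_def is_factor_inf_iff_nth by blast
  show "is_prefix_inf u (xs\<^sup>\<omega>)"
  proof (cases "u = []")
    case False
    then have "xs\<^sup>\<omega> (Suc i) = xs\<^sup>\<omega> (Suc j)"
      using i[rule_format, of 1] j[rule_format, of 1] by auto
    then have "Suc i mod length xs = Suc j mod length xs"
      using assms by (simp add: nth_eq_iff_index_eq)
    then have "i mod length xs = j mod length xs"
      by (simp add: Suc_mod_eq_Suc_mod_iff)
    then have "x = y"
      using i[rule_format, of 0] j[rule_format, of 0] assms(2) by simp
    with \<open>x \<noteq> y\<close> show ?thesis ..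
  qed (simp add: is_prefix_inf_def)
qed

lemma fragile_iter:
  assumes "a \<noteq> b"
  shows "fragile a b c ([a, b, c]\<^sup>\<omega>)"
  unfolding fragile_def
proof (intro exI conjI)
  show "is_prefix_inf ([] @ [a]) ([a, b, c]\<^sup>\<omega>)"
    by (simp add: is_prefix_inf_def pref_def)
  show "is_factor_inf (a # [] @ [b]) ([a, b, c]\<^sup>\<omega>)"
    unfolding is_factor_inf_iff_nth by (rule exI[of _ 0]) (simp add: less_Suc_eq)
  show "is_factor_inf (b # [] @ [c]) ([a, b, c]\<^sup>\<omega>)"
    unfolding is_factor_inf_iff_nth by (rule exI[of _ 1]) (simp add: less_Suc_eq)
qed (rule assms)

section \<open>Longest common prefixes\<close>

lemma lcp_same [simp]: "lcp x x = x"
  by (induction x) auto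

lemma lcp_commute: "lcp x y = lcp y x"
  by (induction x y rule: lcp.induct) auto

lemma length_lcp_le: "length (lcp x y) \<le> length x" "length (lcp x y) \<le> length y"
  by (induction x y rule: lcp.induct) auto

lemma take_length_lcp: "take (length (lcp x y)) x = lcp x y"
  by (induction x y rule: lcp.induct) auto

lemma take_eq_if_le_length_lcp: "n \<le> length (lcp x y) \<Longrightarrow> take n x = take n y"
  by (metis lcp_commute take_length_lcp min.absorb1 take_take)

lemma nth_length_lcp_neq:
  "length (lcp x y) < length x \<Longrightarrow> length (lcp x y) < length y \<Longrightarrow>
   x ! length (lcp x y) \<noteq> y ! length (lcp x y)"
  by (induction x y rule: lcp.induct) auto

section \<open>Images of infinite words under non-erasing morphisms\<close>

lemma morph_Nil [simp]: "morph f [] = []"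
  and morph_Cons [simp]: "morph f (x # v) = f x @ morph f v"
  and morph_append [simp]: "morph f (u @ v) = morph f u @ morph f v"
  by (simp_all add: morph_def)

lemma length_morph_pref_ge:
  assumes "[] \<notin> f ` range w"
  shows "n \<le> length (morph f (pref w n))"
proof (induction n)
  case (Suc n)
  have "f (w n) \<noteq> []" using assms by (metis image_eqI rangeI)
  then show ?case using Suc by (cases "f (w n)") (auto simp: pref_Suc)
qed simp

lemma morph_inf_nth:
  assumes ne: "[] \<notin> f ` range w" and n: "n < length (morph f (pref w m))"
  shows "morph_inf f w n = morph f (pref w m) ! n"
proof (cases "m \<le> Suc n")
  case True
  then obtain d where "Suc n = m + d" using le_Suc_ex by blast
  then show ?thesis using n by (simp add: morph_inf_def pref_add nth_append)
next
  case False
  then obtain d where d: "m = Suc n + d" using le_Suc_ex[of "Suc n" m] by auto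
  have "Suc n \<le> length (morph f (pref w (Suc n)))"
    using length_morph_pref_ge[OF ne] .
  then show ?thesis unfolding d pref_add morph_inf_def by (simp add: nth_append)
qed

lemma pref_morph_inf:
  assumes "[] \<notin> f ` range w"
  shows "pref (morph_inf f w) (length (morph f (pref w k))) = morph f (pref w k)"
  by (rule nth_equalityI) (simp_all add: morph_inf_nth[OF assms])

lemma is_prefix_inf_morph_inf:
  assumes "[] \<notin> f ` range w" and "is_prefix_inf v w"
  shows "is_prefix_inf (morph f v) (morph_inf f w)"
  using assms pref_morph_inf[OF assms(1), of "length v"] unfolding is_prefix_inf_def by metis

lemma morph_inf_first_block:
  assumes "[] \<notin> f ` range w" and "n < length (f (w 0))"
  shows "morph_inf f w n = f (w 0) ! n"
  using morph_inf_nth[OF assms(1), of n 1] assms(2) by (simp add: pref_def)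

lemma pref_morph_inf_first_block:
  assumes "[] \<notin> f ` range w" and "n \<le> length (f (w 0))"
  shows "pref (morph_inf f w) n = take n (f (w 0))"
  using pref_morph_inf[OF assms(1), of 1] take_pref[OF assms(2), of "morph_inf f w"]
  by (simp add: pref_def)

lemma suffix_morph_inf:
  assumes ne: "[] \<notin> f ` range w"
  shows "suffix (length (morph f (pref w k))) (morph_inf f w) = morph_inf f (suffix k w)"
proof
  fix n
  let ?L = "length (morph f (pref w k))" and ?v = "pref (suffix k w) (Suc n)"
  have "[] \<notin> f ` range (suffix k w)"
    using ne by auto
  then have "Suc n \<le> length (morph f ?v)"
    by (rule length_morph_pref_ge)
  then have "morph_inf f w (?L + n) = morph f (pref w (k + Suc n)) ! (?L + n)"
    by (intro morph_inf_nth[OF ne]) (simp only: pref_add morph_append length_append)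
  also have "\<dots> = morph_inf f (suffix k w) n"
    unfolding pref_add morph_append nth_append by (simp add: morph_inf_def)
  finally show "suffix ?L (morph_inf f w) n = morph_inf f (suffix k w) n"
    by simp
qed

lemma morph_inf_block:
  assumes "[] \<notin> f ` range w" and "q < length (f (w k))"
  shows "morph_inf f w (length (morph f (pref w k)) + q) = f (w k) ! q"
proof -
  have "[] \<notin> f ` range (suffix k w)"
    using assms(1) by auto
  then show ?thesis
    using morph_inf_first_block[of f "suffix k w" q] suffix_morph_inf[OF assms(1), of k] assms(2)
    by (metis suffix_nth add_0_right)
qed

lemma is_factor_inf_morph_inf:
  assumes ne: "[] \<notin> f ` range w" and "is_factor_inf v w"
  shows "is_factor_inf (morph f v) (morph_inf f w)"
proof -
  obtain i where "is_prefix_inf v (suffix i w)"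
    using assms(2) by (auto simp: is_factor_inf_iff_prefix_suffix)
  then have "is_prefix_inf (morph f v) (morph_inf f (suffix i w))"
    using ne by (intro is_prefix_inf_morph_inf) auto
  then show ?thesis
    unfolding is_factor_inf_iff_prefix_suffix suffix_morph_inf[OF ne, symmetric] by blast
qed

lemma morph_inf_position_in_block:
  assumes ne: "[] \<notin> f ` range w"
  obtains k q where "n = length (morph f (pref w k)) + q" "q < length (f (w k))"
proof -
  have "\<exists>k q. n = length (morph f (pref w k)) + q \<and> q < length (f (w k))"
  proof (induction n)
    case 0
    have "f (w 0) \<noteq> []" using ne by (metis image_eqI rangeI)
    then show ?case by (intro exI[of _ 0]) auto
  next
    case (Suc n)
    then obtain k q where kq: "n = length (morph f (pref w k)) + q" "q < length (f (w k))"
      by blast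
    show ?case
    proof (cases "Suc q < length (f (w k))")
      case True
      then show ?thesis using kq by (intro exI[of _ k] exI[of _ "Suc q"]) auto
    next
      case False
      then have "Suc n = length (morph f (pref w (Suc k))) + 0"
        using kq by (simp add: pref_Suc)
      moreover have "f (w (Suc k)) \<noteq> []" using ne by (metis image_eqI rangeI)
      ultimately show ?thesis by blast
    qed
  qed
  then show ?thesis using that by blast
qed

section \<open>bLSP morphisms\<close>

locale bLSP_morphism =
  fixes A :: "'a set" and f :: "'a \<Rightarrow> 'a list" and \<alpha> :: 'a
  assumes image_alpha: "f \<alpha> = [\<alpha>]"
    and image_step: "\<And>\<beta>. \<beta> \<in> A \<Longrightarrow> \<beta> \<noteq> \<alpha> \<Longrightarrow> \<exists>\<gamma>\<in>A. f \<beta> = f \<gamma> @ [\<beta>]"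
begin

lemma image_chain:
  assumes "z \<in> A"
  shows "f z \<noteq> [] \<and> f z ! 0 = \<alpha> \<and> last (f z) = z \<and>
    (\<forall>i<length (f z). f (f z ! i) = take (Suc i) (f z))"
  using assms
proof (induction "length (f z)" arbitrary: z rule: less_induct)
  case less
  show ?case
  proof (cases "z = \<alpha>")
    case True
    then show ?thesis using image_alpha by auto
  next
    case False
    then obtain \<gamma> where \<gamma>: "\<gamma> \<in> A" "f z = f \<gamma> @ [z]"
      using image_step less.prems by blast
    then have IH: "f \<gamma> \<noteq> [] \<and> f \<gamma> ! 0 = \<alpha> \<and> (\<forall>i<length (f \<gamma>). f (f \<gamma> ! i) = take (Suc i) (f \<gamma>))"
      using less.hyps[of \<gamma>] by simp
    have "f (f z ! i) = take (Suc i) (f z)" if "i < length (f z)" for i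
      using that IH \<gamma>(2) by (cases "i < length (f \<gamma>)") (auto simp: nth_append less_Suc_eq)
    then show ?thesis using IH \<gamma>(2) by (simp add: nth_append)
  qed
qed

lemma image_nonempty: "z \<in> A \<Longrightarrow> f z \<noteq> []"
  and nth_0_image: "z \<in> A \<Longrightarrow> f z ! 0 = \<alpha>"
  and last_image: "z \<in> A \<Longrightarrow> last (f z) = z"
  and image_nth_image: "z \<in> A \<Longrightarrow> i < length (f z) \<Longrightarrow> f (f z ! i) = take (Suc i) (f z)"
  using image_chain by blast+

lemma nth_image_eq_alpha_iff:
  assumes "z \<in> A" "i < length (f z)"
  shows "f z ! i = \<alpha> \<longleftrightarrow> i = 0"
proof
  assume "f z ! i = \<alpha>"
  then have "take (Suc i) (f z) = [\<alpha>]"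
    using image_nth_image[OF assms] image_alpha by simp
  then have "length (take (Suc i) (f z)) = 1"
    by simp
  then show "i = 0"
    using assms(2) by simp
qed (simp add: nth_0_image assms(1))

lemma nth_length_lcp_append_alpha_neq:
  assumes "x \<in> A" "y \<in> A" "x \<noteq> y"
  shows "(f x @ [\<alpha>]) ! length (lcp (f x) (f y)) \<noteq> (f y @ [\<alpha>]) ! length (lcp (f x) (f y))"
proof -
  define L where "L = length (lcp (f x) (f y))"
  have end_vs_inner: "(f x' @ [\<alpha>]) ! L \<noteq> (f y' @ [\<alpha>]) ! L"
    if "x' \<in> A" "y' \<in> A" "L = length (f x')" "L < length (f y')" for x' y'
  proof -
    have "L \<noteq> 0"
      using image_nonempty[OF that(1)] that(3) by simp
    then show ?thesis
      using that(3,4) nth_image_eq_alpha_iff[OF that(2,4)] by (simp add: nth_append)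
  qed
  consider "L < length (f x)" "L < length (f y)" | "L = length (f x)" "L = length (f y)"
    | "L = length (f x)" "L < length (f y)" | "L < length (f x)" "L = length (f y)"
    using length_lcp_le[of "f x" "f y"] unfolding L_def by linarith
  then have "(f x @ [\<alpha>]) ! L \<noteq> (f y @ [\<alpha>]) ! L"
  proof cases
    case 1
    then show ?thesis
      using nth_length_lcp_neq[of "f x" "f y"] by (simp add: nth_append L_def)
  next
    case 2
    have "f x = take L (f x)"
      using 2 by simp
    also have "\<dots> = take L (f y)"
      using take_eq_if_le_length_lcp[of L "f x" "f y"] L_def by simp
    also have "\<dots> = f y"
      using 2 by simp
    finally show ?thesis
      using last_image[OF assms(1)] last_image[OF assms(2)] assms(3) by simp
  next
    case 3
    then show ?thesis
      using end_vs_inner[OF assms(1,2)] by blast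
  next
    case 4
    then show ?thesis
      using end_vs_inner[OF assms(2,1)] by metis
  qed
  then show ?thesis
    by (simp add: L_def)
qed

lemma nonerasing:
  assumes "\<forall>n. w n \<in> A"
  shows "[] \<notin> f ` range w"
  using image_nonempty assms by (metis imageE rangeE)

lemma morph_inf_block_start:
  assumes "\<forall>n. w n \<in> A"
  shows "morph_inf f w (length (morph f (pref w k))) = \<alpha>"
  using morph_inf_block[OF nonerasing[OF assms], of 0 k] image_nonempty nth_0_image assms by simp

lemma is_prefix_inf_morph_append_alpha:
  assumes "\<forall>n. w n \<in> A"
  shows "is_prefix_inf (morph f (pref w k) @ [\<alpha>]) (morph_inf f w)"
  using pref_morph_inf[OF nonerasing[OF assms], of k] morph_inf_block_start[OF assms, of k]
  unfolding is_prefix_inf_def by (simp add: pref_Suc)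

lemma morph_inf_le_first_block:
  assumes "\<forall>n. w n \<in> A" and "n \<le> length (f (w 0))"
  shows "morph_inf f w n = (f (w 0) @ [\<alpha>]) ! n"
proof (cases "n < length (f (w 0))")
  case True
  then show ?thesis using morph_inf_first_block[OF nonerasing[OF assms(1)]] by (simp add: nth_append)
next
  case False
  moreover have "length (morph f (pref w 1)) = length (f (w 0))"
    by (simp add: pref_def)
  ultimately show ?thesis
    using morph_inf_block_start[OF assms(1), of 1] assms(2) by (simp add: nth_append)
qed

lemma morph_inf_before_block_start:
  assumes "\<forall>n. w n \<in> A" and "Suc i = length (morph f (pref w (Suc m)))"
  shows "morph_inf f w i = w m"
proof -
  have "f (w m) \<noteq> []" using image_nonempty assms(1) by blast
  then have "i = length (morph f (pref w m)) + (length (f (w m)) - 1)"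
    using assms(2) by (cases "f (w m)") (auto simp: pref_Suc)
  then have "morph_inf f w i = f (w m) ! (length (f (w m)) - 1)"
    using morph_inf_block[OF nonerasing[OF assms(1)]] \<open>f (w m) \<noteq> []\<close> by simp
  also have "\<dots> = w m"
    using last_image[of "w m"] assms(1) \<open>f (w m) \<noteq> []\<close> by (simp add: last_conv_nth)
  finally show ?thesis .
qed

lemma morph_inf_eq_alpha_block_start:
  assumes "\<forall>n. w n \<in> A" and "morph_inf f w n = \<alpha>"
  obtains k where "n = length (morph f (pref w k))"
proof -
  have ne: "[] \<notin> f ` range w" using nonerasing[OF assms(1)] .
  obtain k q where kq: "n = length (morph f (pref w k)) + q" "q < length (f (w k))"
    using morph_inf_position_in_block[OF ne] .
  then have "f (w k) ! q = \<alpha>"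
    using morph_inf_block[OF ne kq(2)] assms(2) by simp
  then have "q = 0"
    using nth_image_eq_alpha_iff[OF _ kq(2)] assms(1) by blast
  then show ?thesis using that kq(1) by simp
qed

lemma morph_inf_letter_before:
  assumes "\<forall>n. w n \<in> A" and "morph_inf f w (Suc i) \<noteq> \<alpha>"
  shows "morph_inf f w i = last (butlast (f (morph_inf f w (Suc i))))"
proof -
  have ne: "[] \<notin> f ` range w" using nonerasing[OF assms(1)] .
  obtain k q where kq: "Suc i = length (morph f (pref w k)) + q" "q < length (f (w k))"
    using morph_inf_position_in_block[OF ne] .
  have e: "morph_inf f w (Suc i) = f (w k) ! q"
    using morph_inf_block[OF ne kq(2)] kq(1) by simp
  have "q \<noteq> 0"
    using assms(1,2) e nth_0_image by metis
  then have "i = length (morph f (pref w k)) + (q - 1)"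
    using kq(1) by simp
  then have "morph_inf f w i = f (w k) ! (q - 1)"
    using morph_inf_block[OF ne, of "q - 1" k] kq(2) by simp
  also have "\<dots> = last (butlast (take (Suc q) (f (w k))))"
    using \<open>q \<noteq> 0\<close> kq(2) by (simp add: butlast_take) (subst last_conv_nth; auto)
  also have "\<dots> = last (butlast (f (morph_inf f w (Suc i))))"
    using image_nth_image[of "w k" q] kq(2) assms(1) e by simp
  finally show ?thesis .
qed

lemma block_end_before_alpha:
  assumes "\<forall>n. w n \<in> A" and "morph_inf f w (Suc i) = \<alpha>"
  obtains m where "morph_inf f w i = w m"
    and "suffix (Suc i) (morph_inf f w) = morph_inf f (suffix (Suc m) w)"
proof -
  obtain k where k: "Suc i = length (morph f (pref w k))"
    using morph_inf_eq_alpha_block_start[OF assms] .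
  then obtain m where "k = Suc m"
    by (cases k) auto
  then show ?thesis
    using that k morph_inf_before_block_start[OF assms(1)] suffix_morph_inf[OF nonerasing[OF assms(1)]]
    by metis
qed

lemma left_special_morph_inf:
  assumes wA: "\<forall>n. w n \<in> A" and "left_special_inf u (morph_inf f w)" and "u \<noteq> []"
  obtains m m' where "w m \<noteq> w m'"
    and "is_prefix_inf u (morph_inf f (suffix (Suc m) w))"
    and "is_prefix_inf u (morph_inf f (suffix (Suc m') w))"
proof -
  let ?F = "morph_inf f w"
  obtain x y i j where "x \<noteq> y"
    and "is_prefix_inf (x # u) (suffix i ?F)" "is_prefix_inf (y # u) (suffix j ?F)"
    using assms(2) unfolding left_special_inf_def is_factor_inf_iff_prefix_suffix by blast
  then have x: "?F i = x" "is_prefix_inf u (suffix (Suc i) ?F)"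
    and y: "?F j = y" "is_prefix_inf u (suffix (Suc j) ?F)"
    by (simp_all add: is_prefix_inf_Cons)
  have hd: "?F (Suc i) = hd u" "?F (Suc j) = hd u"
    using x(2) y(2) \<open>u \<noteq> []\<close> by (cases u; simp add: is_prefix_inf_Cons)+
  have "hd u = \<alpha>"
  proof (rule ccontr)
    assume "hd u \<noteq> \<alpha>"
    then have "x = y"
      using morph_inf_letter_before[OF wA, of i] morph_inf_letter_before[OF wA, of j] hd x(1) y(1)
      by simp
    with \<open>x \<noteq> y\<close> show False ..
  qed
  obtain m where "x = w m" "suffix (Suc i) ?F = morph_inf f (suffix (Suc m) w)"
    using block_end_before_alpha[OF wA, of i] hd \<open>hd u = \<alpha>\<close> x(1) by metis
  moreover obtain m' where "y = w m'" "suffix (Suc j) ?F = morph_inf f (suffix (Suc m') w)"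
    using block_end_before_alpha[OF wA, of j] hd \<open>hd u = \<alpha>\<close> y(1) by metis
  ultimately show ?thesis
    using that \<open>x \<noteq> y\<close> x(2) y(2) by metis
qed

lemma length_common_prefix_le_length_lcp:
  assumes "\<forall>n. v n \<in> A" "\<forall>n. v' n \<in> A" "v 0 \<noteq> v' 0"
    and "is_prefix_inf u (morph_inf f v)" "is_prefix_inf u (morph_inf f v')"
  shows "length u \<le> length (lcp (f (v 0)) (f (v' 0)))"
proof (rule ccontr)
  let ?L = "length (lcp (f (v 0)) (f (v' 0)))"
  assume "\<not> length u \<le> ?L"
  then have "morph_inf f v ?L = morph_inf f v' ?L"
    using assms(4,5) by (simp add: is_prefix_inf_iff_nth)
  moreover have "morph_inf f v ?L = (f (v 0) @ [\<alpha>]) ! ?L"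
    using morph_inf_le_first_block[OF assms(1)] length_lcp_le by blast
  moreover have "morph_inf f v' ?L = (f (v' 0) @ [\<alpha>]) ! ?L"
    using morph_inf_le_first_block[OF assms(2)] length_lcp_le by blast
  ultimately show False
    using nth_length_lcp_append_alpha_neq assms(1-3) by metis
qed

lemma is_prefix_inf_morph_inf_if_le_length_lcp:
  assumes "\<forall>n. v n \<in> A" "\<forall>n. v' n \<in> A" "is_prefix_inf u (morph_inf f v')"
    and "length u \<le> length (lcp (f (v 0)) (f (v' 0)))"
  shows "is_prefix_inf u (morph_inf f v)"
proof -
  have "length u \<le> length (f (v 0))" "length u \<le> length (f (v' 0))"
    using assms(4) length_lcp_le le_trans by blast+
  then have "pref (morph_inf f v) (length u) = pref (morph_inf f v') (length u)"
    using pref_morph_inf_first_block[OF nonerasing[OF assms(1)]]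
      pref_morph_inf_first_block[OF nonerasing[OF assms(2)]] take_eq_if_le_length_lcp[OF assms(4)]
    by simp
  then show ?thesis
    using assms(3) unfolding is_prefix_inf_def by simp
qed

lemma LSP_morph_inf_iter:
  assumes "a \<in> A" "b \<in> A" "c \<in> A" "distinct [a, b, c]"
    and lcp_le: "length (lcp (f b) (f c)) \<le> length (lcp (f a) (f b))"
  shows "LSP_inf (morph_inf f ([a, b, c]\<^sup>\<omega>))"
proof -
  define w where "w = [a, b, c]\<^sup>\<omega>"
  have w_nth: "w n = [a, b, c] ! (n mod 3)" for n
    by (simp add: w_def)
  have first_letters: "w 0 = a" "w (Suc 0) = b" "w 2 = c"
    by (simp_all add: w_nth)
  have suffix_mod: "suffix k w = suffix (k mod 3) w" for k
    by (simp add: fun_eq_iff w_nth mod_add_left_eq)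
  have wA: "\<forall>n. suffix k w n \<in> A" for k
  proof
    fix n
    have "[a, b, c] ! ((k + n) mod 3) \<in> set [a, b, c]"
      by (rule nth_mem) simp
    then show "suffix k w n \<in> A"
      using assms(1-3) by (auto simp: w_nth)
  qed
  have from_rotations: "is_prefix_inf u (morph_inf f w)"
    if "is_prefix_inf u (morph_inf f (suffix 1 w))" "is_prefix_inf u (morph_inf f (suffix 2 w))" for u
  proof -
    have "length u \<le> length (lcp (f b) (f c))"
      using length_common_prefix_le_length_lcp[OF wA wA _ that] assms(4) by (simp add: first_letters)
    then have "length u \<le> length (lcp (f (w 0)) (f (suffix 1 w 0)))"
      using lcp_le by (simp add: first_letters)
    then show ?thesis
      using is_prefix_inf_morph_inf_if_le_length_lcp[of w "suffix 1 w"] wA[of 0] wA[of 1] that(1)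
      by simp
  qed
  have "is_prefix_inf u (morph_inf f w)" if ls: "left_special_inf u (morph_inf f w)" and "u \<noteq> []" for u
  proof -
    obtain m m' where "w m \<noteq> w m'"
      and m: "is_prefix_inf u (morph_inf f (suffix (Suc m) w))"
      and m': "is_prefix_inf u (morph_inf f (suffix (Suc m') w))"
      using left_special_morph_inf[OF _ ls \<open>u \<noteq> []\<close>] wA[of 0] by auto
    define r r' where "r = Suc m mod 3" and "r' = Suc m' mod 3"
    have "r \<noteq> r'"
      using \<open>w m \<noteq> w m'\<close> unfolding r_def r'_def Suc_mod_eq_Suc_mod_iff by (auto simp: w_nth)
    moreover have "r < 3" "r' < 3"
      unfolding r_def r'_def by simp_all
    ultimately consider "r = 0" | "r' = 0" | "r = 1 \<and> r' = 2 \<or> r = 2 \<and> r' = 1"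
      by arith
    moreover have "is_prefix_inf u (morph_inf f (suffix r w))" "is_prefix_inf u (morph_inf f (suffix r' w))"
      using m m' suffix_mod unfolding r_def r'_def by metis+
    ultimately show ?thesis
      using from_rotations by cases auto
  qed
  then have "LSP_inf (morph_inf f w)"
    unfolding LSP_inf_def by (metis is_prefix_inf_def length_0_conv pref_0)
  then show ?thesis
    by (simp only: w_def)
qed

lemma left_special_morph_of_factors:
  assumes wA: "\<forall>n. w n \<in> A" and "\<beta> \<noteq> \<gamma>"
    and "is_factor_inf (\<beta> # u @ [b]) w" "is_factor_inf (\<gamma> # u @ [c]) w"
    and "p = take n (f b)" "p = take n (f c)"
  shows "left_special_inf (morph f u @ p) (morph_inf f w)"
proof -
  have "is_factor_inf (x # morph f u @ p) (morph_inf f w)"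
    if "is_factor_inf (x # u @ [y]) w" "p = take n (f y)" for x y
  proof -
    have "x \<in> A"
      using set_subset_range_if_factor[OF that(1)] wA by auto
    then have "f x = butlast (f x) @ [x]"
      using image_nonempty last_image by (metis append_butlast_last_id)
    then have "morph f (x # u @ [y]) = butlast (f x) @ (x # morph f u @ p) @ drop n (f y)"
      using that(2) by (subst \<open>f x = _\<close>) simp
    then show ?thesis
      using is_factor_inf_morph_inf[OF nonerasing[OF wA] that(1)] is_factor_inf_infix by metis
  qed
  then show ?thesis
    unfolding left_special_inf_def using assms(2-6) by blast
qed

lemma fragile_morph_inf_not_LSP:
  assumes lcp_less: "length (lcp (f a) (f b)) < length (lcp (f b) (f c))"
    and wA: "\<forall>n. w n \<in> A" and "fragile a b c w"
  shows "\<not> LSP_inf (morph_inf f w)"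
proof
  assume LSP: "LSP_inf (morph_inf f w)"
  obtain u \<beta> \<gamma> where "\<beta> \<noteq> \<gamma>" and ua: "is_prefix_inf (u @ [a]) w"
    and fb: "is_factor_inf (\<beta> # u @ [b]) w" and fc: "is_factor_inf (\<gamma> # u @ [c]) w"
    using assms(3) unfolding fragile_def by blast
  define l where "l = length (lcp (f a) (f b))"
  define p where "p = take (Suc l) (f b)"
  have l: "Suc l \<le> length (f b)" "l \<le> length (f a)"
    using lcp_less length_lcp_le[of "f b" "f c"] length_lcp_le[of "f a" "f b"] unfolding l_def by auto
  have "p = take (Suc l) (f c)"
    using take_eq_if_le_length_lcp[of "Suc l" "f b" "f c"] lcp_less unfolding p_def l_def by simp
  then have "left_special_inf (morph f u @ p) (morph_inf f w)"
    using left_special_morph_of_factors[OF wA \<open>\<beta> \<noteq> \<gamma>\<close> fb fc p_def] by blast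
  then have p_prefix: "is_prefix_inf (morph f u @ p) (morph_inf f w)"
    using LSP unfolding LSP_inf_def by blast
  have "pref w (Suc (length u)) = u @ [a]"
    using ua unfolding is_prefix_inf_def by simp
  then have "is_prefix_inf (morph f u @ f a @ [\<alpha>]) (morph_inf f w)"
    using is_prefix_inf_morph_append_alpha[OF wA, of "Suc (length u)"] by simp
  from is_prefix_inf_take[OF p_prefix this] have "p = take (Suc l) (f a @ [\<alpha>])"
    using l unfolding p_def by simp
  then have "(f a @ [\<alpha>]) ! l = (f b @ [\<alpha>]) ! l"
    using l unfolding p_def by (metis lessI nth_take nth_append Suc_le_lessD)
  moreover have "is_factor_inf (u @ [a]) w"
    using ua unfolding is_factor_inf_iff_prefix_suffix by (metis suffix_0)
  then have "a \<in> A" "b \<in> A"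
    using set_subset_range_if_factor fb wA by fastforce+
  moreover have "a \<noteq> b"
    using lcp_less length_lcp_le[of "f b" "f c"] by auto
  ultimately show False
    using nth_length_lcp_append_alpha_neq[of a b] unfolding l_def by simp
qed

end

theorem corollary1:
  fixes A :: "'a set" and f :: "'a \<Rightarrow> 'a list" and a b c :: 'a
  assumes "finite A" and "bLSP A f"
    and "a \<in> A" "b \<in> A" "c \<in> A"
    and "a \<noteq> b" "b \<noteq> c" "a \<noteq> c"
  shows "LSP_breaking A f a b c \<longleftrightarrow> length (lcp (f b) (f c)) > length (lcp (f a) (f b))"
proof -
  obtain \<alpha> where "bLSP_morphism A f \<alpha>"
    using assms(2) unfolding bLSP_def bLSP_morphism_def by blast
  then interpret bLSP_morphism A f \<alpha> .
  show ?thesis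
  proof
    assume breaking: "LSP_breaking A f a b c"
    show "length (lcp (f b) (f c)) > length (lcp (f a) (f b))"
    proof (rule ccontr)
      let ?w = "[a, b, c]\<^sup>\<omega>"
      assume "\<not> ?thesis"
      then have "LSP_inf (morph_inf f ?w)"
        using LSP_morph_inf_iter assms(3-8) by simp
      moreover have "\<forall>n. ?w n \<in> A" "fragile a b c ?w" "LSP_inf ?w"
        using assms(3-8) fragile_iter LSP_inf_iter[of "[a, b, c]"] by (auto simp: nth_Cons')
      ultimately show False
        using breaking unfolding LSP_breaking_def by blast
    qed
  next
    assume "length (lcp (f b) (f c)) > length (lcp (f a) (f b))"
    then show "LSP_breaking A f a b c"
      unfolding LSP_breaking_def using fragile_morph_inf_not_LSP by blast
  qed
qed

end
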